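(* Assume $q$ is not identically zero. As $t\to\infty$, $\eta(Z^{(1)}_t)/\eta(r_t)$ is bounded away from zero and infinity in probability.
   Context: Fix $\alpha\ge 2$. Let $(\xi_0(z))_{z\in\mathbb Z}$ be i.i.d. Pareto with $\mathrm{Prob}(\xi_0(z)>x)=x^{-\alpha}$, $x\ge1$. Let $p:\mathbb N\to[0,1]$ be eventually nondecreasing with $p(n)\to1$, $q=1-p$ (extended to $(0,\infty)$ by $q(x)=q(\lceil x\rceil)$). Define $\xi(n)=\xi_0(n)$ for $n\ge0$ and, independently for each $n\ge1$, $\xi(-n)=\xi_0(n)$ with probability $p(n)$, $\xi(-n)=\xi_0(-n)$ with probability $q(n)$. Let $D=\{z\in\mathbb N_0:\xi(z)=\xi(-z)\}$, $\Psi_t(z)=\xi(z)-\frac{|z|}{t}\log\xi(z)$, $Z^{(1)}_t$ a maximiser of $\Psi_t$ over $D$. Let $\eta(x)=\int_0^xq(u)du$ (so $\eta(n)=\sum_{z=1}^nq(z)$ for integer $n$) and $r_t=(t/\log t)^{\alpha/(\alpha-1)}$. *)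

theory Defs
  imports "HOL-Probability.Probability"
begin

text \<open>The field xi built from the i.i.d. field xi0 and the coins:
  coin n = True means xi(-n) = xi0(n) (probability p n).\<close>
definition xi :: "(int \<Rightarrow> 'a \<Rightarrow> real) \<Rightarrow> (nat \<Rightarrow> 'a \<Rightarrow> bool) \<Rightarrow> 'a \<Rightarrow> int \<Rightarrow> real" where
  "xi xi0 coin \<omega> z =
     (if z \<ge> 0 then xi0 z \<omega>
      else (if coin (nat (- z)) \<omega> then xi0 (- z) \<omega> else xi0 z \<omega>))"

definition Dset :: "(int \<Rightarrow> 'a \<Rightarrow> real) \<Rightarrow> (nat \<Rightarrow> 'a \<Rightarrow> bool) \<Rightarrow> 'a \<Rightarrow> nat set" where
  "Dset xi0 coin \<omega> = {z. xi xi0 coin \<omega> (int z) = xi xi0 coin \<omega> (- int z)}"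

definition Psi :: "(int \<Rightarrow> 'a \<Rightarrow> real) \<Rightarrow> (nat \<Rightarrow> 'a \<Rightarrow> bool) \<Rightarrow> real \<Rightarrow> 'a \<Rightarrow> int \<Rightarrow> real" where
  "Psi xi0 coin t \<omega> z = xi xi0 coin \<omega> z - (real_of_int \<bar>z\<bar> / t) * ln (xi xi0 coin \<omega> z)"

definition is_max :: "(int \<Rightarrow> 'a \<Rightarrow> real) \<Rightarrow> (nat \<Rightarrow> 'a \<Rightarrow> bool) \<Rightarrow> real \<Rightarrow> 'a \<Rightarrow> nat \<Rightarrow> bool" where
  "is_max xi0 coin t \<omega> z \<longleftrightarrow> z \<in> Dset xi0 coin \<omega> \<and>
     (\<forall>y \<in> Dset xi0 coin \<omega>. Psi xi0 coin t \<omega> (int y) \<le> Psi xi0 coin t \<omega> (int z))"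

definition eta :: "(nat \<Rightarrow> real) \<Rightarrow> real \<Rightarrow> real" where
  "eta q x = integral {0..x} (\<lambda>u. q (nat \<lceil>u\<rceil>))"

definition r_scale :: "real \<Rightarrow> real \<Rightarrow> real" where
  "r_scale \<alpha> t = (t / ln t) powr (\<alpha> / (\<alpha> - 1))"

end

theory Submission
  imports Defs "HOL-Real_Asymp.Real_Asymp"
begin

text \<open>Write \<open>A = (t / log t)^(1/(\<alpha>-1))\<close>, so that \<open>r\<^sub>t = A^\<alpha> = A t / log t\<close>. Far out, a site
  \<open>z\<close> lies in \<open>D\<close> through its coin with probability at least \<open>1/2\<close>. Hence, for suitable constants
  \<open>\<theta>, \<delta>, K\<close> and with probability close to one: some \<open>z \<le> \<theta> r\<^sub>t / 2\<close> in \<open>D\<close> has \<open>\<xi>(z) > \<theta>A\<close>, which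
  forces \<open>\<Psi>\<^sub>t(Z\<^sub>t) \<ge> \<theta>A/2\<close>; no site below \<open>\<delta> r\<^sub>t\<close> has \<open>\<xi>(z) > \<theta>A/4\<close>; and no site \<open>z\<close> beyond
  \<open>K r\<^sub>t\<close> has \<open>\<xi>(z) > z log(\<theta>A/2) / 2t\<close>. The first estimate is a product over independent sites,
  the other two are union bounds against the Pareto tail; together they trap \<open>Z\<^sub>t\<close> in
  \<open>(\<delta> r\<^sub>t, K r\<^sub>t]\<close>. Finally \<open>q\<close> is eventually nonincreasing, so \<open>\<eta>(k x) \<le> 2k \<eta>(x)\<close> for large \<open>x\<close>,
  which turns this window into bounds on \<open>\<eta>(Z\<^sub>t) / \<eta>(r\<^sub>t)\<close>.\<close>

lemma eta_has_integral:
  fixes q :: "nat \<Rightarrow> real"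
  shows "((\<lambda>u. q (nat \<lceil>u\<rceil>)) has_integral (\<Sum>k=1..n. q k)) {0..real n}"
proof (induction n)
  case 0
  then show ?case using has_integral_refl(2)[of "\<lambda>u. q (nat \<lceil>u\<rceil>)" "0::real"] by simp
next
  case (Suc n)
  have "((\<lambda>u. q (nat \<lceil>u\<rceil>)) has_integral q (Suc n)) {real n..real n + 1}"
  proof (rule has_integral_spike_finite[of "{real n}" _ _ "\<lambda>u. q (Suc n)"])
    fix x assume "x \<in> {real n..real n + 1} - {real n}"
    then have "\<lceil>x\<rceil> = int (Suc n)"
      by (intro ceiling_unique) auto
    then show "q (nat \<lceil>x\<rceil>) = q (Suc n)" by (simp only: nat_int)
  qed (use has_integral_const_real[of "q (Suc n)" "real n" "real n + 1"] in simp_all)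
  from has_integral_combine[OF _ _ Suc this]
  show ?case by (simp add: add.commute)
qed

lemma eta_of_nat: "eta q (real n) = (\<Sum>k=1..n. q k)"
  unfolding eta_def using eta_has_integral by (rule integral_unique)

lemma eta_mono:
  fixes q :: "nat \<Rightarrow> real"
  assumes q: "\<And>k. q k \<ge> 0" and xy: "0 \<le> x" "x \<le> y"
  shows "eta q x \<le> eta q y"
proof -
  have I: "(\<lambda>u. q (nat \<lceil>u\<rceil>)) integrable_on {0..real (nat \<lceil>y\<rceil>)}"
    using eta_has_integral by blast
  have y: "y \<le> real (nat \<lceil>y\<rceil>)" by linarith
  have Ix: "(\<lambda>u. q (nat \<lceil>u\<rceil>)) integrable_on {0..x}"
    by (rule integrable_subinterval_real[OF I]) (use xy y in auto, linarith)
  have Iy: "(\<lambda>u. q (nat \<lceil>u\<rceil>)) integrable_on {0..y}"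
    by (rule integrable_subinterval_real[OF I]) (use xy y in auto)
  show ?thesis unfolding eta_def
    by (rule integral_subset_le) (use Ix Iy xy q in auto)
qed

text \<open>The terms beyond \<open>m\<close> are at most \<open>q m\<close>, and \<open>m * q m\<close> is at most twice the sum of the
  terms between \<open>N\<close> and \<open>m\<close>.\<close>
lemma sum_dilation_le:
  fixes q :: "nat \<Rightarrow> real"
  assumes q0: "\<And>k. q k \<ge> 0"
    and N: "N \<ge> 1" and dec: "\<And>m n. N \<le> m \<Longrightarrow> m \<le> n \<Longrightarrow> q n \<le> q m"
    and m: "m \<ge> 2 * N" and k: "k \<ge> 1"
  shows "(\<Sum>j=1..k*m. q j) \<le> 2 * real k * (\<Sum>j=1..m. q j)"
proof -
  define S where "S = (\<Sum>j=1..m. q j)"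
  have S0: "S \<ge> 0" unfolding S_def by (rule sum_nonneg) (use q0 in auto)
  have mkm: "m \<le> k * m" using k by simp
  have "{1..k*m} = {1..m} \<union> {m+1..k*m}" using order_trans[OF _ mkm] by auto
  then have split: "(\<Sum>j=1..k*m. q j) = S + (\<Sum>j=m+1..k*m. q j)"
    unfolding S_def by (simp add: sum.union_disjoint ivl_disj_int)
  have "(\<Sum>j=m+1..k*m. q j) \<le> real (k*m - m) * q m"
    using sum_bounded_above[of "{m+1..k*m}" q "q m"] dec m by simp
  also have "real (k*m - m) = (real k - 1) * real m"
    using mkm by (simp add: of_nat_diff algebra_simps)
  finally have tail: "(\<Sum>j=m+1..k*m. q j) \<le> (real k - 1) * (real m * q m)"
    by (simp add: mult.assoc)
  have "real (m + 1 - N) * q m \<le> (\<Sum>j=N..m. q j)"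
    using sum_bounded_below[of "{N..m}" "q m" q] dec by simp
  also have "\<dots> \<le> S" unfolding S_def
    by (rule sum_mono2) (use N q0 in auto)
  finally have "real (m + 1 - N) * q m \<le> S" .
  moreover have "real m \<le> 2 * real (m + 1 - N)" using m by linarith
  ultimately have "real m * q m \<le> 2 * S"
    using q0[of m] mult_right_mono[of "real m" "2 * real (m + 1 - N)" "q m"] by linarith
  then have "(\<Sum>j=m+1..k*m. q j) \<le> (real k - 1) * (2 * S)"
    using tail k by (smt (verit) mult_left_mono of_nat_1 of_nat_mono)
  then show ?thesis using split S0 unfolding S_def[symmetric] by (simp add: algebra_simps)
qed

lemma eta_floor_bounds:
  fixes q :: "nat \<Rightarrow> real"
  assumes q: "\<And>k. q k \<ge> 0" and r: "0 \<le> r"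
  shows "(\<Sum>k=1..nat \<lfloor>r\<rfloor>. q k) \<le> eta q r" "eta q r \<le> (\<Sum>k=1..nat \<lfloor>r\<rfloor> + 1. q k)"
proof -
  have "real (nat \<lfloor>r\<rfloor>) \<le> r" "r \<le> real (nat \<lfloor>r\<rfloor> + 1)" using r by linarith+
  then show "(\<Sum>k=1..nat \<lfloor>r\<rfloor>. q k) \<le> eta q r" "eta q r \<le> (\<Sum>k=1..nat \<lfloor>r\<rfloor> + 1. q k)"
    using eta_mono[of q, OF q] r by (metis eta_of_nat of_nat_0_le_iff)+
qed

lemma eta_ratio_bounds:
  fixes q :: "nat \<Rightarrow> real" and r \<delta> K :: real and z :: nat
  assumes q0: "\<And>k. 0 \<le> q k" and N: "N \<ge> 1"
    and dec: "\<And>m n. N \<le> m \<Longrightarrow> m \<le> n \<Longrightarrow> q n \<le> q m"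
    and n0: "n0 \<ge> 1" "q n0 > 0"
    and \<delta>: "\<delta> > 0" and K: "K \<ge> 1"
    and r: "K + 1 \<le> r" "2 * real N \<le> \<delta> * r" "2 * real N + real n0 \<le> r"
    and z: "\<delta> * r < real z" "real z \<le> K * r"
  shows "1 / (2 * real (nat \<lceil>1/\<delta>\<rceil>)) \<le> eta q (real z) / eta q r"
    and "eta q (real z) / eta q r \<le> 2 * real (nat \<lceil>K\<rceil> + 1)"
proof -
  define S where "S n = (\<Sum>k=1..n. q k)" for n
  have S_mono: "S m \<le> S n" if "m \<le> n" for m n
    unfolding S_def by (rule sum_mono2) (use that q0 in auto)
  define m0 where "m0 = nat \<lfloor>r\<rfloor>"
  have m0: "real m0 \<le> r" "r < real m0 + 1" "2 * N \<le> m0" "n0 \<le> m0"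
    using r K unfolding m0_def by linarith+
  have eta_r: "S m0 \<le> eta q r" "eta q r \<le> S (m0 + 1)"
    using eta_floor_bounds[OF q0, of r] r K by (simp_all add: S_def m0_def)
  have "q n0 \<le> S m0" unfolding S_def
    by (rule member_le_sum) (use q0 n0 m0 in auto)
  then have eta_pos: "0 < eta q r" using eta_r n0 by linarith
  define kK where "kK = nat \<lceil>K\<rceil> + 1"
  have "real z \<le> (K + 1) * (r - 1)" using z r by (simp add: algebra_simps)
  also have "\<dots> \<le> real kK * real m0"
  proof (rule mult_mono)
    show "K + 1 \<le> real kK" unfolding kK_def by linarith
  qed (use m0 r K in auto)
  finally have "S z \<le> S (kK * m0)" by (intro S_mono) (simp flip: of_nat_mult)
  also have "\<dots> \<le> 2 * real kK * S m0"
    unfolding S_def by (rule sum_dilation_le[OF q0 N dec]) (use m0 in \<open>auto simp: kK_def\<close>)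
  also have "\<dots> \<le> 2 * real kK * eta q r" using eta_r by (intro mult_left_mono) auto
  finally show "eta q (real z) / eta q r \<le> 2 * real kK"
    using eta_pos by (simp add: divide_le_eq eta_of_nat S_def)
  define kd where "kd = nat \<lceil>1/\<delta>\<rceil>"
  have kd_ge: "1/\<delta> \<le> real kd" unfolding kd_def by linarith
  then have "0 < real kd" using \<delta> by (smt (verit) divide_pos_pos)
  then have kd: "1 \<le> kd" "1/\<delta> \<le> real kd" using kd_ge by simp_all
  have "r = (1/\<delta>) * (\<delta> * r)" using \<delta> by simp
  also have "\<dots> < real kd * real z" using kd z \<delta> r N
    by (intro mult_le_less_imp_less) auto
  finally have "m0 + 1 \<le> kd * z" using m0 by (simp flip: of_nat_mult)
  have "eta q r \<le> S (kd * z)" using eta_r S_mono[OF \<open>m0 + 1 \<le> kd * z\<close>] by linarith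
  also have "\<dots> \<le> 2 * real kd * S z"
    unfolding S_def by (rule sum_dilation_le[OF q0 N dec]) (use z r kd in auto)
  finally show "1 / (2 * real kd) \<le> eta q (real z) / eta q r"
    using eta_pos kd by (simp add: field_simps eta_of_nat S_def)
qed

lemma powr_tail_summable_le:
  fixes n :: nat and \<alpha> :: real
  assumes n: "n \<ge> 1" and \<alpha>: "\<alpha> \<ge> 2"
  shows "summable (\<lambda>i. real (n+i) powr (-\<alpha>))"
    and "(\<Sum>i. real (n+i) powr (-\<alpha>)) \<le> 2 * real n powr (1-\<alpha>)"
proof -
  define f where "f i = - 2 / real (n+i)" for i
  have "f \<longlonglongrightarrow> 0" unfolding f_def by real_asymp
  then have "(\<lambda>i. f (Suc i) - f i) sums (2 / real n)"
    using telescope_sums by (fastforce simp: f_def)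
  moreover have f_diff: "f (Suc i) - f i = 2 / (real (n+i) * real (n+i+1))" for i
    using n by (simp add: f_def field_simps)
  ultimately have "(\<lambda>i. 2 / (real (n+i) * real (n+i+1))) sums (2 / real n)" by simp
  then have g_sums: "(\<lambda>i. real n powr (2-\<alpha>) * (2 / (real (n+i) * real (n+i+1))))
      sums (real n powr (2-\<alpha>) * (2 / real n))"
    by (rule sums_mult)
  have le: "real (n+i) powr (-\<alpha>) \<le> real n powr (2-\<alpha>) * (2 / (real (n+i) * real (n+i+1)))" for i
  proof -
    define x where "x = real (n+i)"
    have x1: "x \<ge> 1" using n by (simp add: x_def)
    have "x powr (-\<alpha>) = x powr (2-\<alpha>) * x powr (-2)"
      using powr_add[of x "2-\<alpha>" "-2"] by simp
    also have "x powr (-2) = 1 / x^2"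
      using x1 by (simp add: powr_minus_divide)
    also have "x powr (2-\<alpha>) * (1 / x^2) \<le> real n powr (2-\<alpha>) * (2 / (x * (x+1)))"
    proof (rule mult_mono)
      show "x powr (2-\<alpha>) \<le> real n powr (2-\<alpha>)"
        using x1 \<alpha> n by (intro powr_mono2') (auto simp: x_def)
      have "x * (x+1) \<le> 2 * x^2" using x1 by (simp add: power2_eq_square algebra_simps)
      then show "1 / x^2 \<le> 2 / (x * (x+1))"
        using x1 frac_le[of 2 2 "x * (x+1)" "2 * x^2"] by simp
    qed auto
    finally show ?thesis by (simp add: x_def add.commute)
  qed
  show sm: "summable (\<lambda>i. real (n+i) powr (-\<alpha>))"
    by (rule summable_comparison_test'[OF sums_summable[OF g_sums]]) (use le in auto)
  have "(\<Sum>i. real (n+i) powr (-\<alpha>)) \<le> real n powr (2-\<alpha>) * (2 / real n)"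
    using suminf_le[OF le sm sums_summable[OF g_sums]] g_sums by (simp add: sums_iff)
  also have "\<dots> = 2 * real n powr (1-\<alpha>)"
    using n powr_add[of "real n" "1-\<alpha>" 1] by simp
  finally show "(\<Sum>i. real (n+i) powr (-\<alpha>)) \<le> 2 * real n powr (1-\<alpha>)" .
qed

lemma prod_one_minus_le_exp_neg_sum:
  fixes u :: "'i \<Rightarrow> real"
  assumes "finite J" "\<And>z. z \<in> J \<Longrightarrow> 0 \<le> u z \<and> u z \<le> 1"
  shows "(\<Prod>z\<in>J. (1 - u z)) \<le> exp (- (\<Sum>z\<in>J. u z))"
proof -
  have "(\<Prod>z\<in>J. (1 - u z)) \<le> (\<Prod>z\<in>J. exp (- u z))"
    by (rule prod_mono) (use assms(2) exp_ge_add_one_self[of "- u _"] in force)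
  also have "\<dots> = exp (- (\<Sum>z\<in>J. u z))"
    using assms(1) by (simp add: exp_sum[symmetric] sum_negf)
  finally show ?thesis .
qed

lemma diff_mult_ln_mono:
  fixes s x0 x :: real
  assumes "0 \<le> s" "s \<le> x0" "0 < x0" "x0 \<le> x"
  shows "x0 - s * ln x0 \<le> x - s * ln x"
proof -
  have "ln x - ln x0 \<le> x / x0 - 1"
    using assms ln_le_minus_one[of "x / x0"] by (simp add: ln_div)
  then have "s * (ln x - ln x0) \<le> s * ((x - x0) / x0)"
    using assms by (intro mult_left_mono) (auto simp: field_simps)
  also have "\<dots> = (s / x0) * (x - x0)" by simp
  also have "\<dots> \<le> x - x0"
    using assms mult_right_mono[of "s / x0" 1 "x - x0"] by simp
  finally show ?thesis by (simp add: algebra_simps)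
qed

lemma powr_t_over_ln_at_top:
  fixes a :: real assumes "0 < a"
  shows "filterlim (\<lambda>t. (t / ln t) powr a) at_top at_top"
proof -
  have "filterlim (\<lambda>t::real. t / ln t) at_top at_top" by real_asymp
  then show ?thesis
    using filterlim_compose[OF real_powr_at_top[OF assms]] by blast
qed

lemma scale_relations:
  fixes \<alpha> t :: real
  assumes \<alpha>: "2 \<le> \<alpha>" and tpos: "0 < t" and t: "1 \<le> ln t" "ln (ln t) \<le> ln t / 2"
  defines "A \<equiv> (t / ln t) powr (1/(\<alpha>-1))"
  shows "r_scale \<alpha> t = A powr \<alpha>" and "r_scale \<alpha> t = A * (t / ln t)"
    and "1 \<le> A" and "A \<le> t" and "ln t / (2*\<alpha>) \<le> ln A"
proof -
  have tl: "1 \<le> t / ln t" and "t / ln t \<le> t"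
    using t ln_le_minus_one[OF tpos] divide_left_mono[of 1 "ln t" t] tpos
    by (simp_all add: field_simps)
  show "r_scale \<alpha> t = A powr \<alpha>"
    unfolding r_scale_def A_def powr_powr using \<alpha> by simp
  have "\<alpha>/(\<alpha>-1) = 1/(\<alpha>-1) + 1" using \<alpha> by (simp add: field_simps)
  moreover have abs_ln: "\<bar>ln t\<bar> = ln t" using t by simp
  ultimately have "r_scale \<alpha> t = (t / ln t) powr (1/(\<alpha>-1) + 1)" unfolding r_scale_def by simp
  then show "r_scale \<alpha> t = A * (t / ln t)"
    unfolding A_def using tl abs_ln tpos by (simp add: powr_add)
  show "1 \<le> A" unfolding A_def using tl \<alpha> by (intro ge_one_powr_ge_zero) auto
  have "A \<le> (t / ln t) powr 1" unfolding A_def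
    using tl \<alpha> by (intro powr_mono) (auto simp: field_simps)
  then show "A \<le> t" using tl \<open>t / ln t \<le> t\<close> by simp
  have "ln t / 2 \<le> ln (t / ln t)" using tpos t by (simp add: ln_div)
  then have "(ln t / 2) / (\<alpha>-1) \<le> ln (t / ln t) / (\<alpha>-1)"
    using \<alpha> by (intro divide_right_mono) auto
  also have "\<dots> = ln A" unfolding A_def using tl by (simp add: ln_powr)
  finally have "(ln t / 2) / (\<alpha>-1) \<le> ln A" .
  moreover have "(ln t / 2) / \<alpha> \<le> (ln t / 2) / (\<alpha>-1)"
    using \<alpha> t by (intro divide_left_mono) auto
  ultimately show "ln t / (2*\<alpha>) \<le> ln A" by simp
qed

text \<open>\<open>\<theta>\<close> is of order \<open>1 / log(1/e)\<close>, so that a marked site above \<open>\<theta>A\<close> exists in \<open>[L, \<theta>r/2]\<close>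
  with probability at least \<open>1 - e\<close>; \<open>\<delta>\<close> and \<open>K\<close> then make the union bounds over the low and the
  high sites at most \<open>e\<close> as well.\<close>
lemma window_constants:
  fixes \<alpha> e :: real
  assumes \<alpha>: "2 \<le> \<alpha>" and e: "0 < e" "e \<le> 1"
  obtains \<theta> \<delta> K where "0 < \<theta>" "\<theta> \<le> 1" "0 < \<delta>" "1 \<le> K"
    "exp (- (\<theta> powr (1-\<alpha>) / 8)) \<le> e" "2 * \<delta> * (4/\<theta>) powr \<alpha> \<le> e" "2 * (8 * \<alpha>) powr \<alpha> / K \<le> e"
proof
  define \<theta> where "\<theta> = 1 / (8 * (ln (1/e) + 1))"
  have ln_e: "0 \<le> ln (1/e)" using e by simp
  show \<theta>: "0 < \<theta>" "\<theta> \<le> 1" using ln_e by (simp_all add: \<theta>_def field_simps)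
  show "0 < e * \<theta> powr \<alpha> / (2 * 4 powr \<alpha>)" using e \<theta> by simp
  show "2 * (e * \<theta> powr \<alpha> / (2 * 4 powr \<alpha>)) * (4/\<theta>) powr \<alpha> \<le> e"
    using \<theta> by (simp add: powr_divide)
  have pos: "1 \<le> (8 * \<alpha>) powr \<alpha>" using \<alpha> by (intro ge_one_powr_ge_zero) auto
  then show "1 \<le> 2 * (8 * \<alpha>) powr \<alpha> / e" using e by (simp add: field_simps)
  show "2 * (8 * \<alpha>) powr \<alpha> / (2 * (8 * \<alpha>) powr \<alpha> / e) \<le> e" using pos e by simp
  have "(1/\<theta>) powr 1 \<le> (1/\<theta>) powr (\<alpha>-1)" using \<theta> \<alpha> by (intro powr_mono) auto
  then have "1 / \<theta> \<le> \<theta> powr (1-\<alpha>)"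
    using \<theta> by (simp add: powr_divide powr_minus_divide[symmetric])
  then have "- (\<theta> powr (1-\<alpha>) / 8) \<le> ln e" using ln_e e by (simp add: \<theta>_def ln_div)
  then show "exp (- (\<theta> powr (1-\<alpha>) / 8)) \<le> e" using e by (metis exp_le_cancel_iff exp_ln)
qed

lemma Psi_ge_at_marked_site:
  fixes xi0 :: "int \<Rightarrow> 'a \<Rightarrow> real" and coin :: "nat \<Rightarrow> 'a \<Rightarrow> bool"
  assumes z: "1 \<le> z" "coin z \<omega>" "x < xi0 (int z) \<omega>"
    and x: "1 \<le> x" and t: "0 < t"
    and "real z / t \<le> x" "real z / t * ln x \<le> x / 2"
  shows "z \<in> Dset xi0 coin \<omega>" and "x / 2 \<le> Psi xi0 coin t \<omega> (int z)"
proof -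
  show "z \<in> Dset xi0 coin \<omega>" using z by (simp add: Dset_def xi_def)
  have "x - real z / t * ln x \<le> xi0 (int z) \<omega> - real z / t * ln (xi0 (int z) \<omega>)"
    using assms by (intro diff_mult_ln_mono) auto
  moreover have "Psi xi0 coin t \<omega> (int z) = xi0 (int z) \<omega> - real z / t * ln (xi0 (int z) \<omega>)"
    by (simp add: Psi_def xi_def)
  ultimately show "x / 2 \<le> Psi xi0 coin t \<omega> (int z)"
    using assms(7) by linarith
qed

text \<open>The maximiser cannot sit at a low site, where \<open>\<Psi>\<close> stays below \<open>y/2\<close>, nor at a high site,
  where the penalty \<open>|z|/t \<cdot> log \<xi>(z)\<close> eats up \<open>\<xi>(z)\<close> whenever \<open>\<xi>(z) > y\<close>.\<close>
lemma maximiser_bounds: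
  fixes xi0 :: "int \<Rightarrow> 'a \<Rightarrow> real" and coin :: "nat \<Rightarrow> 'a \<Rightarrow> bool"
  assumes max: "is_max xi0 coin t \<omega> z" and gt1: "\<forall>z. 1 < xi0 z \<omega>"
    and t: "0 < t" and y: "1 < y"
    and site: "w \<in> Dset xi0 coin \<omega>" "y \<le> Psi xi0 coin t \<omega> (int w)"
    and low: "\<forall>z\<le>m. xi0 (int z) \<omega> \<le> y/2"
    and high: "\<forall>z\<ge>n. xi0 (int z) \<omega> \<le> real z / t * ln y / 2" and n: "1 \<le> n"
  shows "m < z" and "z < n"
proof -
  define x where "x = xi0 (int z) \<omega>"
  have x1: "1 < x" using gt1 by (simp add: x_def)
  have "y \<le> Psi xi0 coin t \<omega> (int z)"
    using max site unfolding is_max_def by force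
  then have Psi_z: "y \<le> x - real z / t * ln x" by (simp add: Psi_def xi_def x_def)
  have penalty: "0 \<le> real z / t * ln x" using t x1 by simp
  show "m < z"
  proof (rule ccontr)
    assume "\<not> m < z"
    then have "x \<le> y/2" using low by (simp add: x_def)
    then show False using Psi_z penalty y by linarith
  qed
  show "z < n"
  proof (rule ccontr)
    assume "\<not> z < n"
    then have hx: "x \<le> real z / t * ln y / 2" and s: "0 < real z / t"
      using high n t by (auto simp: x_def)
    show False
    proof (cases "x \<le> y")
      case True
      then show False using Psi_z s x1 by (smt (verit) ln_gt_zero mult_pos_pos)
    next
      case False
      then have "real z / t * ln y < real z / t * ln x"
        using y s by (intro mult_strict_left_mono) auto
      then show False using Psi_z hx x1 y by argo
    qed
  qed
qed

lemma maximiser_in_window: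
  fixes xi0 :: "int \<Rightarrow> 'a \<Rightarrow> real" and coin :: "nat \<Rightarrow> 'a \<Rightarrow> bool"
  assumes max: "is_max xi0 coin t \<omega> z" and gt1: "\<forall>z. 1 < xi0 z \<omega>"
    and t: "0 < t" "1 \<le> ln t" "A \<le> t" and r: "r = A * (t / ln t)"
    and \<theta>: "0 < \<theta>" "\<theta> \<le> 1" "4 \<le> \<theta> * A" and K: "0 \<le> K" and L: "1 \<le> L"
    and marked: "\<exists>w\<in>{L..nat \<lfloor>\<theta>/2 * r\<rfloor>}. coin w \<omega> \<and> \<theta> * A < xi0 (int w) \<omega>"
    and low: "\<forall>z\<le>nat \<lfloor>\<delta> * r\<rfloor>. xi0 (int z) \<omega> \<le> \<theta> * A / 4"
    and high: "\<forall>z\<ge>nat \<lfloor>K * r\<rfloor> + 1. xi0 (int z) \<omega> \<le> ln (\<theta> * A / 2) / (2 * t) * real z"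
  shows "\<delta> * r < real z" and "real z \<le> K * r"
proof -
  define y where "y = \<theta> * A / 2"
  have A: "0 < A" using \<theta> zero_less_mult_pos[of \<theta> A] by linarith
  have "0 < ln t" using t(2) by linarith
  then have t_gt_1: "1 < t" using t(1) by simp
  have "0 < t / ln t" by (rule divide_pos_pos[OF t(1)]) (use t(2) in linarith)
  then have r_pos: "0 < r" unfolding r using A by (rule mult_pos_pos[rotated])
  obtain w where w: "w \<le> nat \<lfloor>\<theta>/2 * r\<rfloor>" "1 \<le> w" "coin w \<omega>" "\<theta> * A < xi0 (int w) \<omega>"
    using marked L by auto
  have "real w / t \<le> \<theta>/2 * r / t" using w t r_pos \<theta> by (intro divide_right_mono) linarith+
  also have "\<dots> = \<theta> * A / 2 / ln t" using t by (simp add: r)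
  finally have w_t: "real w / t \<le> \<theta> * A / 2 / ln t" .
  also have "\<dots> \<le> \<theta> * A / 2 / 1" using t(2) \<theta> A by (intro divide_left_mono) auto
  also have "\<dots> \<le> \<theta> * A" using \<theta> A by simp
  finally have w_le: "real w / t \<le> \<theta> * A" .
  have "real w / t * ln (\<theta> * A) \<le> \<theta> * A / 2 / ln t * ln t"
  proof (rule mult_mono)
    have "\<theta> * A \<le> t" using \<theta> A t by (smt (verit) mult_left_le_one_le)
    then show "ln (\<theta> * A) \<le> ln t" using \<theta> by simp
  qed (use w_t t \<theta> A t_gt_1 in \<open>auto intro!: divide_nonneg_pos\<close>)
  also have "\<dots> = \<theta> * A / 2" using \<open>0 < ln t\<close> by simp
  finally have w_ln: "real w / t * ln (\<theta> * A) \<le> \<theta> * A / 2" .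
  have "1 \<le> \<theta> * A" using \<theta> by simp
  from Psi_ge_at_marked_site[where coin=coin and ?xi0.0=xi0, OF w(2,3,4) this t(1) w_le w_ln]
  have "w \<in> Dset xi0 coin \<omega>" "y \<le> Psi xi0 coin t \<omega> (int w)" by (simp_all add: y_def)
  from maximiser_bounds[OF max gt1 t(1) _ this, of "nat \<lfloor>\<delta> * r\<rfloor>" "nat \<lfloor>K * r\<rfloor> + 1"]
  have "nat \<lfloor>\<delta> * r\<rfloor> < z" "z < nat \<lfloor>K * r\<rfloor> + 1"
    using \<theta> low high by (simp_all add: y_def field_simps)
  then show "\<delta> * r < real z" "real z \<le> K * r" using K r_pos by linarith+
qed

lemma (in prob_space) prob_ge_of_AE_cover:
  assumes "AE \<omega> in M. \<omega> \<in> space M - (A \<union> B \<union> C) \<longrightarrow> \<omega> \<in> W"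
    and "A \<in> events" "B \<in> events" "C \<in> events" "W \<in> events"
  shows "1 - (prob A + prob B + prob C) \<le> prob W"
proof -
  have "prob (A \<union> B \<union> C) \<le> prob A + prob B + prob C"
    using assms(2-4) measure_Un_le by (smt (verit) sets.Un)
  moreover have "prob (space M - (A \<union> B \<union> C)) \<le> prob W"
    using assms(1,5) by (rule finite_measure_mono_AE)
  ultimately show ?thesis using prob_compl[of "A \<union> B \<union> C"] assms(2-4) by auto
qed

lemma (in prob_space) eventually_prob_eta_ratio_bounds:
  fixes q :: "nat \<Rightarrow> real" and Z :: "real \<Rightarrow> 'a \<Rightarrow> nat" and r :: "real \<Rightarrow> real"
  assumes q0: "\<And>k. 0 \<le> q k" and N: "1 \<le> N" "\<And>m n. N \<le> m \<Longrightarrow> m \<le> n \<Longrightarrow> q n \<le> q m"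
    and n0: "1 \<le> n0" "0 < q n0" and \<delta>: "0 < \<delta>" and K: "1 \<le> K"
    and r: "filterlim r at_top at_top"
    and Z: "\<forall>\<^sub>F t in at_top. Z t \<in> measurable M (count_space UNIV)"
    and window: "\<forall>\<^sub>F t in at_top. b \<le> prob {\<omega> \<in> space M. \<delta> * r t < real (Z t \<omega>) \<and> real (Z t \<omega>) \<le> K * r t}"
  obtains c C where "0 < c" "c \<le> C"
    "\<forall>\<^sub>F t in at_top. b \<le> prob {\<omega> \<in> space M.
       c \<le> eta q (real (Z t \<omega>)) / eta q (r t) \<and> eta q (real (Z t \<omega>)) / eta q (r t) \<le> C}"
proof
  define c where "c = 1 / (2 * real (nat \<lceil>1/\<delta>\<rceil>))"
  define C where "C = 2 * real (nat \<lceil>K\<rceil> + 1)"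
  have "1/\<delta> \<le> real (nat \<lceil>1/\<delta>\<rceil>)" by linarith
  then have kd: "1 \<le> real (nat \<lceil>1/\<delta>\<rceil>)" using \<delta> by (simp add: divide_le_eq)
  then show "0 < c" unfolding c_def using \<delta> by simp
  have "c \<le> 1/2" unfolding c_def using kd \<delta> by (simp add: divide_le_eq)
  moreover have "2 \<le> C" unfolding C_def by simp
  ultimately show "c \<le> C" by linarith
  have "\<forall>\<^sub>F t in at_top. K + 1 + 2 * real N / \<delta> + 2 * real N + real n0 \<le> r t"
    using r unfolding filterlim_at_top by blast
  with window Z show "\<forall>\<^sub>F t in at_top. b \<le> prob {\<omega> \<in> space M.
       c \<le> eta q (real (Z t \<omega>)) / eta q (r t) \<and> eta q (real (Z t \<omega>)) / eta q (r t) \<le> C}"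
  proof eventually_elim
    case (elim t)
    have "0 \<le> 2 * real N / \<delta>" using \<delta> by simp
    then have "K + 1 \<le> r t" "2 * real N / \<delta> \<le> r t" "2 * real N + real n0 \<le> r t"
      using elim(3) K by linarith+
    then have r_t: "K + 1 \<le> r t" "2 * real N \<le> \<delta> * r t" "2 * real N + real n0 \<le> r t"
      using \<delta> by (simp_all add: divide_le_eq mult.commute)
    have "{\<omega> \<in> space M. \<delta> * r t < real (Z t \<omega>) \<and> real (Z t \<omega>) \<le> K * r t} \<subseteq> {\<omega> \<in> space M.
        c \<le> eta q (real (Z t \<omega>)) / eta q (r t) \<and> eta q (real (Z t \<omega>)) / eta q (r t) \<le> C}"
      using eta_ratio_bounds[where q=q, OF q0 N n0 \<delta> K r_t] unfolding c_def C_def by auto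
    moreover have "{\<omega> \<in> space M. c \<le> eta q (real (Z t \<omega>)) / eta q (r t) \<and>
        eta q (real (Z t \<omega>)) / eta q (r t) \<le> C} \<in> events"
      using measurable_sets[OF elim(2),
          of "{n. c \<le> eta q (real n) / eta q (r t) \<and> eta q (real n) / eta q (r t) \<le> C}"]
      by (simp add: vimage_def Int_def conj_commute)
    ultimately show ?case using elim(1) finite_measure_mono by (smt (verit))
  qed
qed

locale mirrored_pareto = prob_space M for M :: "'a measure" +
  fixes \<alpha> :: real and p :: "nat \<Rightarrow> real"
    and xi0 :: "int \<Rightarrow> 'a \<Rightarrow> real" and coin :: "nat \<Rightarrow> 'a \<Rightarrow> bool"
  assumes alpha: "2 \<le> \<alpha>"
    and p_range: "\<And>n. 0 \<le> p n \<and> p n \<le> 1"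
    and indep: "indep_vars (\<lambda>_. borel)
          (\<lambda>i \<omega>. case i of Inl z \<Rightarrow> xi0 z \<omega> | Inr n \<Rightarrow> of_bool (coin n \<omega>))
          (range Inl \<union> Inr ` {1..})"
    and pareto: "\<And>z x. 1 \<le> x \<Longrightarrow> prob {\<omega> \<in> space M. x < xi0 z \<omega>} = x powr (- \<alpha>)"
    and coin_prob: "\<And>n. 1 \<le> n \<Longrightarrow> prob {\<omega> \<in> space M. coin n \<omega>} = p n"
begin

lemma family_measurable:
  "\<forall>i\<in>range Inl \<union> Inr ` {1..}.
     (\<lambda>\<omega>. case i of Inl z \<Rightarrow> xi0 z \<omega> | Inr n \<Rightarrow> of_bool (coin n \<omega>)) \<in> borel_measurable M"
  using indep unfolding indep_vars_def2 by blast

lemma xi0_borel_measurable [measurable]: "xi0 z \<in> borel_measurable M"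
  using bspec[OF family_measurable, of "Inl z"] by simp

lemma coin_event:
  assumes "1 \<le> n" shows "{\<omega> \<in> space M. coin n \<omega>} \<in> events"
proof -
  have "(\<lambda>\<omega>. of_bool (coin n \<omega>) :: real) \<in> borel_measurable M"
    using bspec[OF family_measurable, of "Inr n"] assms by simp
  from measurable_sets[OF this, of "{1}"] show ?thesis
    by (simp add: vimage_def Int_def conj_commute)
qed

lemma AE_xi0_gt_1: "AE \<omega> in M. \<forall>z. 1 < xi0 z \<omega>"
proof (subst AE_all_countable, intro allI)
  fix z
  have "AE \<omega> in M. \<omega> \<in> {\<omega> \<in> space M. 1 < xi0 z \<omega>}" by (rule AE_prob_1) (simp add: pareto)
  then show "AE \<omega> in M. 1 < xi0 z \<omega>" by (rule eventually_mono) auto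
qed

lemma prob_marked_exceedance:
  assumes z: "1 \<le> z" and x: "1 \<le> x"
  shows "prob ({\<omega> \<in> space M. coin z \<omega>} \<inter> {\<omega> \<in> space M. x < xi0 (int z) \<omega>}) = p z * x powr (-\<alpha>)"
proof -
  define X :: "int + nat \<Rightarrow> 'a \<Rightarrow> real"
    where "X i \<omega> = (case i of Inl z \<Rightarrow> xi0 z \<omega> | Inr n \<Rightarrow> of_bool (coin n \<omega>))" for i \<omega>
  define B :: "int + nat \<Rightarrow> real set" where "B i = (case i of Inl _ \<Rightarrow> {x<..} | Inr _ \<Rightarrow> {1})" for i
  have "prob (\<Inter>i\<in>{Inl (int z), Inr z}. X i -` B i \<inter> space M)
      = (\<Prod>i\<in>{Inl (int z), Inr z}. prob (X i -` B i \<inter> space M))"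
    by (rule indep_varsD[OF indep[folded X_def]]) (use z in \<open>auto simp: B_def\<close>)
  moreover have "X (Inr z) -` B (Inr z) \<inter> space M = {\<omega> \<in> space M. coin z \<omega>}"
    and "X (Inl (int z)) -` B (Inl (int z)) \<inter> space M = {\<omega> \<in> space M. x < xi0 (int z) \<omega>}"
    by (auto simp: X_def B_def)
  ultimately show ?thesis using z x by (simp add: coin_prob pareto Int_commute)
qed

definition site_events :: "nat \<Rightarrow> 'a set set" where
  "site_events z = sigma_sets (space M)
     ({xi0 (int z) -` A \<inter> space M | A. A \<in> sets borel} \<union>
      {(\<lambda>\<omega>. of_bool (coin z \<omega>) :: real) -` A \<inter> space M | A. A \<in> sets borel})"

lemma indep_site_events: "indep_sets site_events {1..}"
proof -
  define X :: "int + nat \<Rightarrow> 'a \<Rightarrow> real"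
    where "X i \<omega> = (case i of Inl z \<Rightarrow> xi0 z \<omega> | Inr n \<Rightarrow> of_bool (coin n \<omega>))" for i \<omega>
  define E where "E i = {X i -` A \<inter> space M | A. A \<in> sets (borel :: real measure)}" for i
  define I where "I z = {Inl (int z), Inr z}" for z :: nat
  have "indep_sets (\<lambda>z. sigma_sets (space M) (\<Union>i\<in>I z. E i)) {1..}"
  proof (rule indep_sets_collect_sigma)
    have "indep_sets E (range Inl \<union> Inr ` {1..})"
      using indep unfolding indep_vars_def2 E_def X_def by auto
    then show "indep_sets E (\<Union>j\<in>{1..}. I j)"
      by (rule indep_sets_mono_index[rotated]) (auto simp: I_def)
    show "Int_stable (E i)" for i
    proof (rule Int_stableI)
      fix a b assume "a \<in> E i" "b \<in> E i"
      then obtain A B where "A \<in> sets borel" "B \<in> sets borel"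
        "a = X i -` A \<inter> space M" "b = X i -` B \<inter> space M" unfolding E_def by blast
      then show "a \<inter> b \<in> E i" unfolding E_def by (intro CollectI exI[of _ "A \<inter> B"]) auto
    qed
    show "disjoint_family_on I {1..}"
      unfolding disjoint_family_on_def I_def by auto
  qed
  moreover have "sigma_sets (space M) (\<Union>i\<in>I z. E i) = site_events z" for z
    unfolding site_events_def I_def E_def X_def by (simp add: Un_commute)
  ultimately show ?thesis by simp
qed

lemma no_marked_exceedance_site_event:
  "space M - ({\<omega> \<in> space M. coin z \<omega>} \<inter> {\<omega> \<in> space M. x < xi0 (int z) \<omega>}) \<in> site_events z"
proof -
  have "{\<omega> \<in> space M. coin z \<omega>} \<in> site_events z"
    unfolding site_events_def
    by (intro sigma_sets.Basic UnI2 CollectI exI[of _ "{1}"]) auto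
  moreover have "{\<omega> \<in> space M. x < xi0 (int z) \<omega>} \<in> site_events z"
    unfolding site_events_def
    by (intro sigma_sets.Basic UnI1 CollectI exI[of _ "{x<..}"]) auto
  ultimately have "(space M - {\<omega> \<in> space M. coin z \<omega>}) \<union>
      (space M - {\<omega> \<in> space M. x < xi0 (int z) \<omega>}) \<in> site_events z"
    unfolding site_events_def by (intro sigma_sets_Un sigma_sets.Compl)
  then show ?thesis by (simp add: Diff_Int)
qed

lemma no_marked_exceedance_event:
  assumes "J \<subseteq> {1..}" "finite J"
  shows "{\<omega> \<in> space M. \<forall>z\<in>J. \<not> (coin z \<omega> \<and> x < xi0 (int z) \<omega>)} \<in> events"
proof (rule sets.sets_Collect_finite_All[OF _ assms(2)])
  fix z assume "z \<in> J"
  then have "{\<omega> \<in> space M. coin z \<omega>} \<in> events" using assms by (intro coin_event) auto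
  then show "{\<omega> \<in> space M. \<not> (coin z \<omega> \<and> x < xi0 (int z) \<omega>)} \<in> events"
    by (auto simp: Collect_neg_eq Diff_Int[symmetric] intro!: sets.compl_sets)
qed

lemma prob_no_marked_exceedance:
  assumes J: "finite J" "J \<subseteq> {1..}" and x: "1 \<le> x"
  shows "prob {\<omega> \<in> space M. \<forall>z\<in>J. \<not> (coin z \<omega> \<and> x < xi0 (int z) \<omega>)}
    = (\<Prod>z\<in>J. 1 - p z * x powr (-\<alpha>))"
proof (cases "J = {}")
  case True
  then show ?thesis by (simp add: prob_space)
next
  case False
  define G where "G z = {\<omega> \<in> space M. coin z \<omega>} \<inter> {\<omega> \<in> space M. x < xi0 (int z) \<omega>}" for z
  have G: "G z \<in> events" if "z \<in> J" for z
    using coin_event that J unfolding G_def by auto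
  have "prob (\<Inter>z\<in>J. space M - G z) = (\<Prod>z\<in>J. prob (space M - G z))"
    by (rule indep_setsD[OF indep_site_events J(2) False J(1)])
       (simp add: G_def no_marked_exceedance_site_event)
  also have "\<dots> = (\<Prod>z\<in>J. 1 - p z * x powr (-\<alpha>))"
  proof (rule prod.cong)
    fix z assume "z \<in> J"
    then show "prob (space M - G z) = 1 - p z * x powr (-\<alpha>)"
      using J x prob_compl[OF G] unfolding G_def by (auto simp: prob_marked_exceedance)
  qed simp
  also have "(\<Inter>z\<in>J. space M - G z) = {\<omega> \<in> space M. \<forall>z\<in>J. \<not> (coin z \<omega> \<and> x < xi0 (int z) \<omega>)}"
    using False unfolding G_def by blast
  finally show ?thesis .
qed

lemma prob_no_marked_site_le:
  assumes \<theta>: "0 < \<theta>" "1 \<le> \<theta> * A" and r: "r = A powr \<alpha>"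
    and L: "1 \<le> L" "\<And>z. L \<le> z \<Longrightarrow> 1/2 \<le> p z" and Lr: "2 * real L \<le> \<theta> / 2 * r"
  shows "prob {\<omega> \<in> space M. \<forall>z\<in>{L..nat \<lfloor>\<theta>/2 * r\<rfloor>}. \<not> (coin z \<omega> \<and> \<theta> * A < xi0 (int z) \<omega>)}
    \<le> exp (- (\<theta> powr (1-\<alpha>) / 8))"
proof -
  define J where "J = {L..nat \<lfloor>\<theta>/2 * r\<rfloor>}"
  define w where "w = (\<theta> * A) powr (-\<alpha>)"
  have A: "0 < A" using \<theta> zero_less_mult_pos[of \<theta> A] by linarith
  have w_eq: "w = \<theta> powr (-\<alpha>) / r"
    unfolding w_def r using A \<theta> by (simp add: powr_mult powr_minus_divide)
  have "1 \<le> (\<theta> * A) powr \<alpha>" using \<theta> alpha by (intro ge_one_powr_ge_zero) auto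
  then have w: "0 \<le> w" "w \<le> 1" unfolding w_def powr_minus_divide by (auto simp: divide_le_eq)
  have card_J: "\<theta>/2 * r / 2 \<le> real (card J)"
  proof -
    have le: "L \<le> Suc (nat \<lfloor>\<theta>/2 * r\<rfloor>)" and fl: "\<theta>/2 * r - 1 \<le> real (nat \<lfloor>\<theta>/2 * r\<rfloor>)"
      using Lr L by linarith+
    have "card J = Suc (nat \<lfloor>\<theta>/2 * r\<rfloor>) - L" by (simp add: J_def)
    then have "real (card J) = real (nat \<lfloor>\<theta>/2 * r\<rfloor>) + 1 - real L"
      by (simp only: of_nat_diff[OF le] of_nat_Suc)
    then show ?thesis using fl Lr by linarith
  qed
  have "prob {\<omega> \<in> space M. \<forall>z\<in>J. \<not> (coin z \<omega> \<and> \<theta> * A < xi0 (int z) \<omega>)} = (\<Prod>z\<in>J. 1 - p z * w)"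
    unfolding w_def by (rule prob_no_marked_exceedance) (use L \<theta> in \<open>auto simp: J_def\<close>)
  also have "\<dots> \<le> exp (- (\<Sum>z\<in>J. p z * w))"
    by (rule prod_one_minus_le_exp_neg_sum) (use p_range w in \<open>auto simp: J_def intro: mult_le_one\<close>)
  also have "\<dots> \<le> exp (- (\<theta> powr (1-\<alpha>) / 8))"
  proof -
    have "\<theta> powr (1-\<alpha>) = \<theta> * \<theta> powr (-\<alpha>)" using \<theta> powr_add[of \<theta> 1 "-\<alpha>"] by simp
    moreover have "0 < r" using A by (simp add: r)
    ultimately have "\<theta> powr (1-\<alpha>) / 8 = (\<theta>/2 * r / 2) * (w / 2)"
      unfolding w_eq by (simp add: field_simps)
    also have "\<dots> \<le> real (card J) * (w / 2)" using card_J w by (intro mult_right_mono) auto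
    also have "\<dots> \<le> (\<Sum>z\<in>J. p z * w)"
    proof (rule sum_bounded_below)
      fix z assume "z \<in> J"
      then have "1/2 \<le> p z" using L by (simp add: J_def)
      then show "w / 2 \<le> p z * w" using w mult_right_mono[of "1/2" "p z" w] by simp
    qed
    finally show ?thesis by simp
  qed
  finally show ?thesis unfolding J_def .
qed

lemma prob_exists_exceeds_le:
  assumes "1 \<le> x"
  shows "prob {\<omega> \<in> space M. \<exists>z\<le>n. x < xi0 (int z) \<omega>} \<le> real (n + 1) * x powr (-\<alpha>)"
proof -
  have "{\<omega> \<in> space M. \<exists>z\<le>n. x < xi0 (int z) \<omega>} = (\<Union>z\<in>{..n}. {\<omega> \<in> space M. x < xi0 (int z) \<omega>})"
    by auto
  also have "prob \<dots> \<le> (\<Sum>z\<in>{..n}. prob {\<omega> \<in> space M. x < xi0 (int z) \<omega>})"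
    by (rule finite_measure_subadditive_finite) auto
  also have "\<dots> = real (n + 1) * x powr (-\<alpha>)" using pareto[OF assms] by simp
  finally show ?thesis .
qed

lemma prob_low_site_exceeds_le:
  assumes \<theta>: "0 < \<theta>" "4 \<le> \<theta> * A" and r: "r = A powr \<alpha>" and \<delta>: "0 < \<delta>" "1 \<le> \<delta> * r"
  shows "prob {\<omega> \<in> space M. \<exists>z\<le>nat \<lfloor>\<delta> * r\<rfloor>. \<theta> * A / 4 < xi0 (int z) \<omega>} \<le> 2 * \<delta> * (4/\<theta>) powr \<alpha>"
proof -
  have A: "0 < A" using \<theta> zero_less_mult_pos[of \<theta> A] by linarith
  have "real (nat \<lfloor>\<delta> * r\<rfloor> + 1) \<le> 2 * \<delta> * r" using \<delta> by linarith
  moreover have "(\<theta> * A / 4) powr (-\<alpha>) = (4/\<theta>) powr \<alpha> / r"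
    using A \<theta> unfolding r by (simp add: powr_mult powr_divide powr_minus_divide)
  moreover have "prob {\<omega> \<in> space M. \<exists>z\<le>nat \<lfloor>\<delta> * r\<rfloor>. \<theta> * A / 4 < xi0 (int z) \<omega>}
      \<le> real (nat \<lfloor>\<delta> * r\<rfloor> + 1) * (\<theta> * A / 4) powr (-\<alpha>)"
    by (rule prob_exists_exceeds_le) (use \<theta> in simp)
  ultimately show ?thesis
    using A \<delta> mult_right_mono[of "real (nat \<lfloor>\<delta> * r\<rfloor> + 1)" "2 * \<delta> * r" "(4/\<theta>) powr \<alpha> / r"]
    by (simp add: r)
qed

lemma prob_exists_exceeds_linear_le:
  assumes s: "0 < s" and n: "1 \<le> n" "1 \<le> s * real n"
  shows "prob {\<omega> \<in> space M. \<exists>z\<ge>n. s * real z < xi0 (int z) \<omega>}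
    \<le> 2 * s powr (-\<alpha>) * real n powr (1-\<alpha>)"
proof -
  define B where "B i = {\<omega> \<in> space M. s * real (n+i) < xi0 (int (n+i)) \<omega>}" for i
  have "{\<omega> \<in> space M. \<exists>z\<ge>n. s * real z < xi0 (int z) \<omega>} = (\<Union>i. B i)"
  proof (intro equalityI subsetI)
    fix \<omega> assume "\<omega> \<in> {\<omega> \<in> space M. \<exists>z\<ge>n. s * real z < xi0 (int z) \<omega>}"
    then obtain z where "\<omega> \<in> space M" "n \<le> z" "s * real z < xi0 (int z) \<omega>" by auto
    then show "\<omega> \<in> (\<Union>i. B i)" unfolding B_def by (intro UN_I[of "z - n"]) auto
  next
    fix \<omega> assume "\<omega> \<in> (\<Union>i. B i)"
    then obtain i where "\<omega> \<in> B i" by blast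
    then show "\<omega> \<in> {\<omega> \<in> space M. \<exists>z\<ge>n. s * real z < xi0 (int z) \<omega>}"
      unfolding B_def by (intro CollectI conjI exI[of _ "n+i"]) auto
  qed
  have prob_B: "prob (B i) = s powr (-\<alpha>) * real (n+i) powr (-\<alpha>)" for i
  proof -
    have "1 \<le> s * real (n+i)" using n s by (smt (verit) mult_left_mono of_nat_add of_nat_0_le_iff)
    then show ?thesis using s unfolding B_def by (simp add: pareto powr_mult)
  qed
  note tail = powr_tail_summable_le[OF n(1) alpha]
  have "summable (\<lambda>i. prob (B i))"
    unfolding prob_B by (rule summable_mult[OF tail(1)])
  then have "prob (\<Union>i. B i) \<le> (\<Sum>i. prob (B i))"
    by (intro finite_measure_subadditive_countably) (auto simp: B_def)
  also have "\<dots> = s powr (-\<alpha>) * (\<Sum>i. real (n+i) powr (-\<alpha>))"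
    unfolding prob_B using tail(1) by (rule suminf_mult)
  also have "\<dots> \<le> s powr (-\<alpha>) * (2 * real n powr (1-\<alpha>))"
    using tail(2) by (intro mult_left_mono) auto
  finally show ?thesis using \<open>_ = (\<Union>i. B i)\<close> by simp
qed

lemma prob_high_site_exceeds_le:
  assumes K: "1 \<le> K" "8 * \<alpha> \<le> K * A" and A: "0 < A" and r: "r = A powr \<alpha>"
    and s: "A / (8 * \<alpha> * r) \<le> s"
  shows "prob {\<omega> \<in> space M. \<exists>z\<ge>nat \<lfloor>K * r\<rfloor> + 1. s * real z < xi0 (int z) \<omega>} \<le> 2 * (8 * \<alpha>) powr \<alpha> / K"
proof -
  define s0 where "s0 = A / (8 * \<alpha> * r)"
  define n where "n = nat \<lfloor>K * r\<rfloor> + 1"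
  have pos: "0 < r" "0 < s0" using A alpha by (simp_all add: r s0_def)
  have n: "1 \<le> n" "K * r \<le> real n" using K pos unfolding n_def by linarith+
  have "1 \<le> s0 * (K * r)" using K pos A alpha by (simp add: s0_def field_simps)
  also have "\<dots> \<le> s0 * real n" using n pos by (intro mult_left_mono) auto
  finally have s0n: "1 \<le> s0 * real n" .
  have "prob {\<omega> \<in> space M. \<exists>z\<ge>n. s * real z < xi0 (int z) \<omega>}
      \<le> prob {\<omega> \<in> space M. \<exists>z\<ge>n. s0 * real z < xi0 (int z) \<omega>}"
  proof (rule finite_measure_mono)
    have "s0 * real z \<le> s * real z" for z using s by (intro mult_right_mono) (auto simp: s0_def)
    then show "{\<omega> \<in> space M. \<exists>z\<ge>n. s * real z < xi0 (int z) \<omega>}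
        \<subseteq> {\<omega> \<in> space M. \<exists>z\<ge>n. s0 * real z < xi0 (int z) \<omega>}" by (auto intro: le_less_trans)
  qed measurable
  also have "\<dots> \<le> 2 * s0 powr (-\<alpha>) * real n powr (1-\<alpha>)"
    using pos n s0n by (intro prob_exists_exceeds_linear_le) auto
  also have "\<dots> \<le> 2 * s0 powr (-\<alpha>) * (K * r) powr (1-\<alpha>)"
    using n K pos alpha by (intro mult_left_mono powr_mono2') auto
  also have "\<dots> = 2 * ((8 * \<alpha>) powr \<alpha> * K powr (1-\<alpha>))"
  proof -
    have "s0 powr (-\<alpha>) = (8 * \<alpha>) powr \<alpha> * r powr (\<alpha>-1)"
      using A alpha pos unfolding s0_def
      by (simp add: powr_divide powr_mult powr_minus_divide powr_diff r field_simps)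
    moreover have "r powr (\<alpha>-1) * r powr (1-\<alpha>) = 1" using pos by (simp flip: powr_add)
    ultimately show ?thesis using K pos by (simp add: powr_mult algebra_simps)
  qed
  also have "2 * ((8 * \<alpha>) powr \<alpha> * K powr (1-\<alpha>)) \<le> 2 * ((8 * \<alpha>) powr \<alpha> * K powr (-1))"
    using K alpha by (intro mult_left_mono powr_mono) auto
  finally show ?thesis using K by (simp add: n_def powr_minus_divide)
qed

lemma prob_window_ge:
  fixes Z :: "'a \<Rightarrow> nat" and t A r \<theta> \<delta> K :: real and L :: nat
  assumes Z: "Z \<in> measurable M (count_space UNIV)" "AE \<omega> in M. is_max xi0 coin t \<omega> (Z \<omega>)"
    and L: "1 \<le> L" "\<And>z. L \<le> z \<Longrightarrow> 1/2 \<le> p z"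
    and t: "0 < t" "1 \<le> ln t" "A \<le> t"
    and r: "r = A powr \<alpha>" "r = A * (t / ln t)"
    and \<theta>: "0 < \<theta>" "\<theta> \<le> 1" "4 \<le> \<theta> * A" "ln t / (4 * \<alpha>) \<le> ln (\<theta> * A / 2)"
    and \<delta>: "0 < \<delta>" "1 \<le> \<delta> * r"
    and K: "1 \<le> K" "8 * \<alpha> \<le> K * A"
    and Lr: "2 * real L \<le> \<theta> / 2 * r"
  shows "1 - (exp (- (\<theta> powr (1-\<alpha>) / 8)) + 2 * \<delta> * (4/\<theta>) powr \<alpha> + 2 * (8 * \<alpha>) powr \<alpha> / K)
    \<le> prob {\<omega> \<in> space M. \<delta> * r < real (Z \<omega>) \<and> real (Z \<omega>) \<le> K * r}"
proof -
  define s where "s = ln (\<theta> * A / 2) / (2 * t)"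
  define B1 where "B1 = {\<omega> \<in> space M. \<forall>z\<in>{L..nat \<lfloor>\<theta>/2 * r\<rfloor>}. \<not> (coin z \<omega> \<and> \<theta> * A < xi0 (int z) \<omega>)}"
  define B2 where "B2 = {\<omega> \<in> space M. \<exists>z\<le>nat \<lfloor>\<delta> * r\<rfloor>. \<theta> * A / 4 < xi0 (int z) \<omega>}"
  define B3 where "B3 = {\<omega> \<in> space M. \<exists>z\<ge>nat \<lfloor>K * r\<rfloor> + 1. s * real z < xi0 (int z) \<omega>}"
  define W where "W = {\<omega> \<in> space M. \<delta> * r < real (Z \<omega>) \<and> real (Z \<omega>) \<le> K * r}"
  have A: "0 < A" using \<theta> zero_less_mult_pos[of \<theta> A] by linarith
  have "A / (8 * \<alpha> * r) = ln t / (4 * \<alpha>) / (2 * t)"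
    using A t alpha by (simp add: r(2) field_simps)
  also have "\<dots> \<le> s" unfolding s_def using \<theta> t by (intro divide_right_mono) auto
  finally have s: "A / (8 * \<alpha> * r) \<le> s" .
  have B1: "B1 \<in> events" unfolding B1_def using L by (intro no_marked_exceedance_event) auto
  have B23: "B2 \<in> events" "B3 \<in> events" unfolding B2_def B3_def by measurable
  have W: "W \<in> events" unfolding W_def
    using measurable_sets[OF Z(1), of "{n. \<delta> * r < real n \<and> real n \<le> K * r}"]
    by (simp add: vimage_def Int_def conj_commute)
  have "AE \<omega> in M. \<omega> \<in> space M - (B1 \<union> B2 \<union> B3) \<longrightarrow> \<omega> \<in> W"
    using AE_xi0_gt_1 Z(2)
  proof eventually_elim
    case (elim \<omega>)
    show ?case
    proof
      assume "\<omega> \<in> space M - (B1 \<union> B2 \<union> B3)"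
      then have \<omega>: "\<omega> \<in> space M" "\<omega> \<notin> B1" "\<omega> \<notin> B2" "\<omega> \<notin> B3" by auto
      have marked: "\<exists>w\<in>{L..nat \<lfloor>\<theta>/2 * r\<rfloor>}. coin w \<omega> \<and> \<theta> * A < xi0 (int w) \<omega>"
        using \<omega> by (auto simp: B1_def)
      have low: "\<forall>z\<le>nat \<lfloor>\<delta> * r\<rfloor>. xi0 (int z) \<omega> \<le> \<theta> * A / 4"
        using \<omega> by (auto simp: B2_def not_less)
      have high: "\<forall>z\<ge>nat \<lfloor>K * r\<rfloor> + 1. xi0 (int z) \<omega> \<le> ln (\<theta> * A / 2) / (2 * t) * real z"
        using \<omega> by (auto simp: B3_def s_def not_less)
      have "0 \<le> K" using K by simp
      from maximiser_in_window[OF elim(2,1) t r(2) \<theta>(1-3) this L(1) marked low high]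
      show "\<omega> \<in> W" using \<omega>(1) by (simp add: W_def)
    qed
  qed
  then have "1 - (prob B1 + prob B2 + prob B3) \<le> prob W"
    using B1 B23 W by (rule prob_ge_of_AE_cover)
  moreover have "prob B1 \<le> exp (- (\<theta> powr (1-\<alpha>) / 8))"
    unfolding B1_def by (rule prob_no_marked_site_le) (use \<theta> L r Lr in auto)
  moreover have "prob B2 \<le> 2 * \<delta> * (4/\<theta>) powr \<alpha>"
    unfolding B2_def by (rule prob_low_site_exceeds_le) (use \<theta> r \<delta> in auto)
  moreover have "prob B3 \<le> 2 * (8 * \<alpha>) powr \<alpha> / K"
    unfolding B3_def by (rule prob_high_site_exceeds_le) (use K A r s in auto)
  ultimately show ?thesis unfolding W_def by linarith
qed

lemma eventually_prob_window_ge: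
  fixes Z :: "real \<Rightarrow> 'a \<Rightarrow> nat"
  assumes p_lim: "p \<longlonglongrightarrow> 1"
    and Z_max: "\<forall>\<^sub>F t in at_top. Z t \<in> measurable M (count_space UNIV) \<and>
                   (AE \<omega> in M. is_max xi0 coin t \<omega> (Z t \<omega>))"
    and e: "0 < e" "e \<le> 1"
  obtains \<delta> K where "0 < \<delta>" "1 \<le> K"
    "\<forall>\<^sub>F t in at_top. 1 - 3 * e \<le>
       prob {\<omega> \<in> space M. \<delta> * r_scale \<alpha> t < real (Z t \<omega>) \<and> real (Z t \<omega>) \<le> K * r_scale \<alpha> t}"
proof -
  have "\<forall>\<^sub>F n in sequentially. 1/2 < p n" using p_lim by (rule order_tendstoD) simp
  then obtain L0 where "\<forall>z\<ge>L0. 1/2 < p z" by (auto simp: eventually_sequentially)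
  then have L: "1 \<le> max L0 1" "\<And>z. max L0 1 \<le> z \<Longrightarrow> 1/2 \<le> p z" by force+
  obtain \<theta> \<delta> K where \<theta>: "0 < \<theta>" "\<theta> \<le> 1" and \<delta>: "0 < \<delta>" and K: "1 \<le> K"
    and bounds: "exp (- (\<theta> powr (1-\<alpha>) / 8)) \<le> e" "2 * \<delta> * (4/\<theta>) powr \<alpha> \<le> e"
      "2 * (8 * \<alpha>) powr \<alpha> / K \<le> e"
    using window_constants[OF alpha e] by blast
  define A0 where "A0 = 4/\<theta> + 8 * \<alpha> / K + 1/\<delta> + 4 * real (max L0 1) / \<theta>"
  have ln_ge: "\<forall>\<^sub>F t in at_top. c \<le> ln t" for c :: real
    using ln_at_top unfolding filterlim_at_top by blast
  have "\<forall>\<^sub>F t in at_top. A0 \<le> (t / ln t) powr (1/(\<alpha>-1))"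
    using powr_t_over_ln_at_top[of "1/(\<alpha>-1)"] alpha unfolding filterlim_at_top by simp
  moreover have "\<forall>\<^sub>F t::real in at_top. ln (ln t) \<le> ln t / 2" by real_asymp
  moreover note ln_ge[of 1] ln_ge[of "4 * \<alpha> * ln (2/\<theta>)"] eventually_gt_at_top[of 0] Z_max
  ultimately have "\<forall>\<^sub>F t in at_top. 1 - 3 * e \<le>
       prob {\<omega> \<in> space M. \<delta> * r_scale \<alpha> t < real (Z t \<omega>) \<and> real (Z t \<omega>) \<le> K * r_scale \<alpha> t}"
  proof eventually_elim
    case (elim t)
    then have t: "0 < t" "1 \<le> ln t" "4 * \<alpha> * ln (2/\<theta>) \<le> ln t" "ln (ln t) \<le> ln t / 2"
      and A0: "A0 \<le> (t / ln t) powr (1/(\<alpha>-1))"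
      and Z: "Z t \<in> measurable M (count_space UNIV)" "AE \<omega> in M. is_max xi0 coin t \<omega> (Z t \<omega>)"
      by auto
    define A where "A = (t / ln t) powr (1/(\<alpha>-1))"
    note scale = scale_relations[OF alpha t(1,2,4), folded A_def]
    define r where "r = r_scale \<alpha> t"
    have "A powr 1 \<le> A powr \<alpha>" using scale(3) alpha by (intro powr_mono) auto
    then have "A \<le> r" using scale by (simp add: r_def)
    moreover have "A0 \<le> A" using A0 by (simp add: A_def)
    ultimately have "4/\<theta> \<le> A" "8 * \<alpha> / K \<le> A" "1/\<delta> \<le> r" "4 * real (max L0 1) / \<theta> \<le> r"
      using \<theta> \<delta> K alpha unfolding A0_def by (smt (verit) divide_nonneg_pos of_nat_0_le_iff)+
    then have A: "4 \<le> \<theta> * A" "8 * \<alpha> \<le> K * A" "1 \<le> \<delta> * r" "2 * real (max L0 1) \<le> \<theta> / 2 * r"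
      using \<theta> \<delta> K by (simp_all add: divide_le_eq mult.commute)
    have "ln (\<theta> * A / 2) = ln A - ln (2/\<theta>)" using \<theta> scale(3) by (simp add: ln_div ln_mult)
    moreover have "ln t / (4 * \<alpha>) \<le> ln t / (2 * \<alpha>) - ln (2/\<theta>)"
      using t(3) alpha by (simp add: field_simps)
    ultimately have "ln t / (4 * \<alpha>) \<le> ln (\<theta> * A / 2)" using scale(5) by linarith
    from prob_window_ge[OF Z L t(1,2) scale(4) scale(1,2)[folded r_def] \<theta> A(1) this \<delta> A(3) K A(2) A(4)]
    show ?case using bounds by (simp add: r_def)
  qed
  then show thesis using that \<delta> K by blast
qed

end

theorem lemma3p8:
  fixes M :: "'a measure"
    and \<alpha> :: real
    and p :: "nat \<Rightarrow> real"
    and xi0 :: "int \<Rightarrow> 'a \<Rightarrow> real"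
    and coin :: "nat \<Rightarrow> 'a \<Rightarrow> bool"
    and Z :: "real \<Rightarrow> 'a \<Rightarrow> nat"
  assumes "prob_space M"
    and alpha: "\<alpha> \<ge> 2"
    and p_range: "\<And>n. 0 \<le> p n \<and> p n \<le> 1"
    and p_mono: "\<exists>N. \<forall>m n. N \<le> m \<longrightarrow> m \<le> n \<longrightarrow> p m \<le> p n"
    and p_lim: "p \<longlonglongrightarrow> 1"
    and q_nonzero: "\<exists>n\<ge>1. 1 - p n \<noteq> 0"
    and indep: "prob_space.indep_vars M (\<lambda>_. borel)
          (\<lambda>i \<omega>. case i of Inl z \<Rightarrow> xi0 z \<omega> | Inr n \<Rightarrow> of_bool (coin n \<omega>))
          (range Inl \<union> Inr ` {1..})"
    and pareto: "\<And>z x. x \<ge> 1 \<Longrightarrow> measure M {\<omega> \<in> space M. xi0 z \<omega> > x} = x powr (- \<alpha>)"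
    and coin_prob: "\<And>n. n \<ge> 1 \<Longrightarrow> measure M {\<omega> \<in> space M. coin n \<omega>} = p n"
    and Z_max: "\<forall>\<^sub>F t in at_top. Z t \<in> measurable M (count_space UNIV) \<and>
                   (AE \<omega> in M. is_max xi0 coin t \<omega> (Z t \<omega>))"
  shows "\<forall>\<epsilon>>0. \<exists>c C T. 0 < c \<and> c \<le> C \<and>
           (\<forall>t\<ge>T. measure M {\<omega> \<in> space M.
                c \<le> eta (\<lambda>n. 1 - p n) (real (Z t \<omega>)) / eta (\<lambda>n. 1 - p n) (r_scale \<alpha> t) \<and>
                eta (\<lambda>n. 1 - p n) (real (Z t \<omega>)) / eta (\<lambda>n. 1 - p n) (r_scale \<alpha> t) \<le> C}
              \<ge> 1 - \<epsilon>)"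
proof (intro allI impI)
  interpret mirrored_pareto M \<alpha> p xi0 coin
    by (intro mirrored_pareto.intro mirrored_pareto_axioms.intro assms(1) alpha p_range indep pareto coin_prob)
  fix \<epsilon> :: real assume "0 < \<epsilon>"
  obtain N0 where "\<forall>m n. N0 \<le> m \<longrightarrow> m \<le> n \<longrightarrow> p m \<le> p n" using p_mono by blast
  then have N: "1 \<le> max N0 1" "\<And>m n. max N0 1 \<le> m \<Longrightarrow> m \<le> n \<Longrightarrow> 1 - p n \<le> 1 - p m" by auto
  obtain n0 where n0: "1 \<le> n0" "0 < 1 - p n0"
    using q_nonzero p_range by (metis order_le_less diff_ge_0_iff_ge)
  obtain \<delta> K where \<delta>: "0 < \<delta>" and K: "1 \<le> K" and window3: "\<forall>\<^sub>F t in at_top. 1 - 3 * (min \<epsilon> 1 / 3) \<le>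
      prob {\<omega> \<in> space M. \<delta> * r_scale \<alpha> t < real (Z t \<omega>) \<and> real (Z t \<omega>) \<le> K * r_scale \<alpha> t}"
    by (rule eventually_prob_window_ge[OF p_lim Z_max, of "min \<epsilon> 1 / 3"]) (use \<open>0 < \<epsilon>\<close> in auto)
  have window: "\<forall>\<^sub>F t in at_top. 1 - \<epsilon> \<le>
      prob {\<omega> \<in> space M. \<delta> * r_scale \<alpha> t < real (Z t \<omega>) \<and> real (Z t \<omega>) \<le> K * r_scale \<alpha> t}"
    by (rule eventually_mono[OF window3]) linarith
  have r: "filterlim (r_scale \<alpha>) at_top at_top"
    unfolding r_scale_def[abs_def] using alpha by (intro powr_t_over_ln_at_top) simp
  have Zm: "\<forall>\<^sub>F t in at_top. Z t \<in> measurable M (count_space UNIV)"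
    using Z_max by (rule eventually_mono) simp
  have q0: "\<And>k. 0 \<le> 1 - p k" using p_range by simp
  obtain c C where "0 < c" "c \<le> C" and "\<forall>\<^sub>F t in at_top. 1 - \<epsilon> \<le> prob {\<omega> \<in> space M.
      c \<le> eta (\<lambda>n. 1 - p n) (real (Z t \<omega>)) / eta (\<lambda>n. 1 - p n) (r_scale \<alpha> t) \<and>
      eta (\<lambda>n. 1 - p n) (real (Z t \<omega>)) / eta (\<lambda>n. 1 - p n) (r_scale \<alpha> t) \<le> C}"
    by (rule eventually_prob_eta_ratio_bounds[where q="\<lambda>n. 1 - p n", OF q0 N n0 \<delta> K r Zm window])
  then show "\<exists>c C T. 0 < c \<and> c \<le> C \<and> (\<forall>t\<ge>T. measure M {\<omega> \<in> space M.
      c \<le> eta (\<lambda>n. 1 - p n) (real (Z t \<omega>)) / eta (\<lambda>n. 1 - p n) (r_scale \<alpha> t) \<and>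
      eta (\<lambda>n. 1 - p n) (real (Z t \<omega>)) / eta (\<lambda>n. 1 - p n) (r_scale \<alpha> t) \<le> C} \<ge> 1 - \<epsilon>)"
    unfolding eventually_at_top_linorder by blast
qed

end
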